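(* There is a one-to-one correspondence between strict $2$-term Nijenhuis $\mathcal L_\infty$-conformal algebras and crossed modules of Nijenhuis Lie conformal algebras.
   Context: All spaces are over $\mathbb C$. A Lie conformal algebra is a $\mathbb C[\partial]$-module with a $\mathbb C$-bilinear $\lambda$-bracket satisfying $[\partial a_\lambda b]=-\lambda[a_\lambda b]$, $[a_\lambda\partial b]=(\partial+\lambda)[a_\lambda b]$, $[a_\lambda b]=-[b_{-\partial-\lambda}a]$, $[a_\lambda[b_\mu c]]=[[a_\lambda b]_{\lambda+\mu}c]+[b_\mu[a_\lambda c]]$. A Nijenhuis operator is a $\mathbb C[\partial]$-linear $\mathcal N$ with $[\mathcal N(p)_\lambda\mathcal N(q)]=\mathcal N([\mathcal N(p)_\lambda q]+[p_\lambda\mathcal N(q)]-\mathcal N([p_\lambda q]))$; a Nijenhuis Lie conformal algebra is a Lie conformal algebra with a Nijenhuis operator; morphisms are bracket-preserving $\mathbb C[\partial]$-linear maps intertwining the operators. A conformal representation $\rho:\mathcal L\otimes\mathcal M\to\mathcal M[\lambda]$ satisfies $\rho(\partial p)_\lambda=-\lambda\rho(p)_\lambda$, $\rho(p)_\lambda\partial m=(\partial+\lambda)\rho(p)_\lambda m$, $\rho(p)_\lambda\rho(q)_\mu m-\rho(q)_\mu\rho(p)_\lambda m=\rho([p_\lambda q])_{\lambda+\mu}m$; a representation of a Nijenhuis Lie conformal algebra $(\mathcal L,[\cdot_\lambda\cdot],\mathcal N)$ is $(\mathcal M,\rho,\mathcal N_{\mathcal M})$ with $\mathcal N_{\mathcal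 M}$ $\mathbb C[\partial]$-linear and $\rho(\mathcal N(p))_\lambda\mathcal N_{\mathcal M}(m)=\mathcal N_{\mathcal M}(\rho(\mathcal N(p))_\lambda m+\rho(p)_\lambda\mathcal N_{\mathcal M}(m)-\mathcal N_{\mathcal M}(\rho(p)_\lambda m))$. A crossed module of Nijenhuis Lie conformal algebras is a quadruple $(\mathcal L_{0\,\mathcal N_0},\mathcal L_{1\,\mathcal N_1},t,\rho)$: two Nijenhuis Lie conformal algebras, a morphism $t:\mathcal L_{1\,\mathcal N_1}\to\mathcal L_{0\,\mathcal N_0}$, and a conformal sesquilinear $\rho:\mathcal L_0\otimes\mathcal L_1\to\mathcal L_1[\lambda]$ making $(\mathcal L_1,\rho,\mathcal N_1)$ a representation of $\mathcal L_{0\,\mathcal N_0}$, with $t(\rho(p)_\lambda m)=[p_\lambda t(m)]_{\mathcal L_0}$ and $\rho(t(m))_\lambda n=[m_\lambda n]_{\mathcal L_1}$. A strict $2$-term Nijenhuis $\mathcal L_\infty$-conformal algebra consists of a $\mathbb C[\partial]$-linear map $d:\mathcal L_1\to\mathcal L_0$ of $\mathbb C[\partial]$-modules, conformal sesquilinear $\mathbb C$-bilinear brackets $\llbracket\cdot_\lambda\cdot\rrbracket$: $\mathcal L_0\otimes\mathcal L_0\to\mathcal L_0[\lambda]$, $\mathcal L_0\otimes\mathcal L_1\to\mathcal L_1[\lambda]$, $\mathcal L_1\otimes\mathcal L_0\to\mathcal L_1[\lambda]$ (with $\llbracket m_\lambda n\rrbracket=0$ for $m,n\in\mathcal L_1$),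 and $\mathbb C[\partial]$-linear maps $\mathcal N_0:\mathcal L_0\to\mathcal L_0$, $\mathcal N_1:\mathcal L_1\to\mathcal L_1$, such that for all $p,q,r\in\mathcal L_0$, $m,n\in\mathcal L_1$: $\llbracket p_\lambda m\rrbracket=-\llbracket m_{-\partial-\lambda}p\rrbracket$; $\llbracket p_\lambda q\rrbracket=-\llbracket q_{-\partial-\lambda}p\rrbracket$; $d\llbracket p_\lambda m\rrbracket=\llbracket p_\lambda d(m)\rrbracket$; $\llbracket d(m)_\lambda n\rrbracket=\llbracket m_\lambda d(n)\rrbracket$; $\llbracket p_\lambda\llbracket q_\mu r\rrbracket\rrbracket-\llbracket\llbracket p_\lambda q\rrbracket_{\lambda+\mu}r\rrbracket-\llbracket q_\mu\llbracket p_\lambda r\rrbracket\rrbracket=0$; $\llbracket p_\lambda\llbracket q_\mu m\rrbracket\rrbracket-\llbracket\llbracket p_\lambda q\rrbracket_{\lambda+\mu}m\rrbracket-\llbracket q_\mu\llbracket p_\lambda m\rrbracket\rrbracket=0$; $d\circ\mathcal N_1=\mathcal N_0\circ d$; $\mathcal N_0(\llbracket\mathcal N_0(p)_\lambda q\rrbracket+\llbracket p_\lambda\mathcal N_0(q)\rrbracket-\mathcal N_0\llbracket p_\lambda q\rrbracket)=\llbracket\mathcal N_0(p)_\lambda\mathcal N_0(q)\rrbracket$; $\mathcal N_1(\llbracket\mathcal N_0(p)_\lambda m\rrbracket+\llbracket p_\lambda\mathcal N_1(m)\rrbracket-\mathcal N_1\llbracket p_\lambda m\rrbracket)=\llbracket\mathcal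 N_0(p)_\lambda\mathcal N_1(m)\rrbracket$. (It is the special case $l_3=0$, $\mathcal N_2=0$ of a $2$-term $\mathcal L_\infty$-conformal algebra with homotopy Nijenhuis operator.) *)

theory Defs
  imports "HOL-Computational_Algebra.Polynomial"
begin

text \<open>
A \<open>\<complex>[\<partial>]\<close>-module is a type carrying a complex vector space structure
(scalar multiplication \<open>sc\<close>) together with a \<open>\<complex>\<close>-linear endomorphism \<open>D\<close> (= \<open>\<partial>\<close>).
An element of \<open>M[\<lambda>]\<close> is a polynomial \<open>'m poly\<close> with coefficients in \<open>M\<close>
(coefficient \<open>i\<close> = coefficient of \<open>\<lambda>^i\<close>); \<open>\<partial>\<close> acts coefficientwise, multiplication by
\<open>\<lambda>\<close> is \<open>pCons 0\<close>.  Elements of \<open>M[\<lambda>,\<mu>]\<close> are \<open>'m poly poly\<close>: the outer variable is \<open>\<mu>\<close>,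
the inner variable (of the coefficients) is \<open>\<lambda>\<close>.
\<close>

definition cmodule :: "(complex \<Rightarrow> 'a::ab_group_add \<Rightarrow> 'a) \<Rightarrow> ('a \<Rightarrow> 'a) \<Rightarrow> bool" where
  "cmodule sc D \<longleftrightarrow> vector_space sc \<and> Vector_Spaces.linear sc sc D"

definition cd_linear ::
  "(complex \<Rightarrow> 'a::ab_group_add \<Rightarrow> 'a) \<Rightarrow> (complex \<Rightarrow> 'b::ab_group_add \<Rightarrow> 'b)
   \<Rightarrow> ('a \<Rightarrow> 'a) \<Rightarrow> ('b \<Rightarrow> 'b) \<Rightarrow> ('a \<Rightarrow> 'b) \<Rightarrow> bool" where
  "cd_linear sca scb Da Db f \<longleftrightarrow> Vector_Spaces.linear sca scb f \<and> (\<forall>x. f (Da x) = Db (f x))"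

definition bilin ::
  "(complex \<Rightarrow> 'x::ab_group_add \<Rightarrow> 'x) \<Rightarrow> (complex \<Rightarrow> 'y::ab_group_add \<Rightarrow> 'y)
   \<Rightarrow> (complex \<Rightarrow> 'z::ab_group_add \<Rightarrow> 'z) \<Rightarrow> ('x \<Rightarrow> 'y \<Rightarrow> 'z poly) \<Rightarrow> bool" where
  "bilin scx scy scz br \<longleftrightarrow>
     (\<forall>a a' b. br (a + a') b = br a b + br a' b) \<and>
     (\<forall>a b b'. br a (b + b') = br a b + br a b') \<and>
     (\<forall>c a b. br (scx c a) b = map_poly (scz c) (br a b)) \<and>
     (\<forall>c a b. br a (scy c b) = map_poly (scz c) (br a b))"

definition sesq ::
  "('x \<Rightarrow> 'x) \<Rightarrow> ('y \<Rightarrow> 'y) \<Rightarrow> ('z::ab_group_add \<Rightarrow> 'z) \<Rightarrow> ('x \<Rightarrow> 'y \<Rightarrow> 'z poly) \<Rightarrow> bool" where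
  "sesq Dx Dy Dz br \<longleftrightarrow>
     (\<forall>a b. br (Dx a) b = - pCons 0 (br a b)) \<and>
     (\<forall>a b. br a (Dy b) = map_poly Dz (br a b) + pCons 0 (br a b))"

text \<open>substitution \<open>\<lambda> \<mapsto> -\<partial>-\<lambda>\<close> in an element of \<open>M[\<lambda>]\<close> (Horner scheme; \<open>\<partial>\<close> acts on coefficients)\<close>
definition subst_nd :: "('z::ab_group_add \<Rightarrow> 'z) \<Rightarrow> 'z poly \<Rightarrow> 'z poly" where
  "subst_nd D p = fold_coeffs (\<lambda>c acc. [:c:] - (map_poly D acc + pCons 0 acc)) p 0"

text \<open>substitution \<open>\<nu> \<mapsto> \<lambda>+\<mu>\<close>: from \<open>M[\<nu>]\<close> to \<open>M[\<lambda>,\<mu>]\<close>\<close>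
definition subst_sum :: "'z::ab_group_add poly \<Rightarrow> 'z poly poly" where
  "subst_sum r = fold_coeffs (\<lambda>z acc. [:[:z:]:] + map_poly (pCons 0) acc + pCons 0 acc) r 0"

text \<open>change of representation: outer variable \<open>\<lambda>\<close>/inner \<open>\<mu>\<close> to outer \<open>\<mu>\<close>/inner \<open>\<lambda>\<close>\<close>
definition swap_var :: "'z::ab_group_add poly poly \<Rightarrow> 'z poly poly" where
  "swap_var P = fold_coeffs (\<lambda>Q acc. map_poly (\<lambda>x. [:x:]) Q + map_poly (pCons 0) acc) P 0"

text \<open>Jacobi-type identity
  \<open>[a\<^sub>\<lambda>[b\<^sub>\<mu> c]] = [[a\<^sub>\<lambda> b]\<^sub>\<lambda>\<^sub>+\<^sub>\<mu> c] + [b\<^sub>\<mu>[a\<^sub>\<lambda> c]]\<close>, where \<open>brB\<close> is the bracket on \<open>X\<close>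
  and \<open>brA : X \<otimes> Y \<rightarrow> Y[\<lambda>]\<close>; all three terms live in \<open>Y[\<lambda>,\<mu>]\<close>.\<close>
definition jacobi :: "('x \<Rightarrow> 'y::ab_group_add \<Rightarrow> 'y poly) \<Rightarrow> ('x \<Rightarrow> 'x::zero \<Rightarrow> 'x poly) \<Rightarrow> bool" where
  "jacobi brA brB \<longleftrightarrow>
     (\<forall>a b c. map_poly (brA a) (brA b c) =
        fold_coeffs (\<lambda>y acc. subst_sum (brA y c) + map_poly (pCons 0) acc) (brB a b) 0
        + swap_var (map_poly (brA b) (brA a c)))"

definition lie_conformal :: "(complex \<Rightarrow> 'a::ab_group_add \<Rightarrow> 'a) \<Rightarrow> ('a \<Rightarrow> 'a) \<Rightarrow> ('a \<Rightarrow> 'a \<Rightarrow> 'a poly) \<Rightarrow> bool" where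
  "lie_conformal sc D br \<longleftrightarrow>
     bilin sc sc sc br \<and> sesq D D D br \<and>
     (\<forall>a b. br a b = - subst_nd D (br b a)) \<and> jacobi br br"

definition nij_cond :: "('x \<Rightarrow> 'x) \<Rightarrow> ('y::ab_group_add \<Rightarrow> 'y) \<Rightarrow> ('x \<Rightarrow> 'y \<Rightarrow> 'y poly) \<Rightarrow> bool" where
  "nij_cond NA NB br \<longleftrightarrow>
     (\<forall>p m. br (NA p) (NB m) = map_poly NB (br (NA p) m + br p (NB m) - map_poly NB (br p m)))"

definition nijenhuis_lca ::
  "(complex \<Rightarrow> 'a::ab_group_add \<Rightarrow> 'a) \<Rightarrow> ('a \<Rightarrow> 'a) \<Rightarrow> ('a \<Rightarrow> 'a \<Rightarrow> 'a poly) \<Rightarrow> ('a \<Rightarrow> 'a) \<Rightarrow> bool" where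
  "nijenhuis_lca sc D br N \<longleftrightarrow> lie_conformal sc D br \<and> cd_linear sc sc D D N \<and> nij_cond N N br"

definition conf_rep ::
  "(complex \<Rightarrow> 'a::ab_group_add \<Rightarrow> 'a) \<Rightarrow> ('a \<Rightarrow> 'a) \<Rightarrow> ('a \<Rightarrow> 'a \<Rightarrow> 'a poly)
   \<Rightarrow> (complex \<Rightarrow> 'b::ab_group_add \<Rightarrow> 'b) \<Rightarrow> ('b \<Rightarrow> 'b) \<Rightarrow> ('a \<Rightarrow> 'b \<Rightarrow> 'b poly) \<Rightarrow> bool" where
  "conf_rep sc0 D0 br sc1 D1 rho \<longleftrightarrow> bilin sc0 sc1 sc1 rho \<and> sesq D0 D1 D1 rho \<and> jacobi rho br"

definition nij_rep ::
  "(complex \<Rightarrow> 'a::ab_group_add \<Rightarrow> 'a) \<Rightarrow> ('a \<Rightarrow> 'a) \<Rightarrow> ('a \<Rightarrow> 'a \<Rightarrow> 'a poly) \<Rightarrow> ('a \<Rightarrow> 'a)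
   \<Rightarrow> (complex \<Rightarrow> 'b::ab_group_add \<Rightarrow> 'b) \<Rightarrow> ('b \<Rightarrow> 'b) \<Rightarrow> ('a \<Rightarrow> 'b \<Rightarrow> 'b poly) \<Rightarrow> ('b \<Rightarrow> 'b) \<Rightarrow> bool" where
  "nij_rep sc0 D0 br N0 sc1 D1 rho N1 \<longleftrightarrow>
     conf_rep sc0 D0 br sc1 D1 rho \<and> cd_linear sc1 sc1 D1 D1 N1 \<and> nij_cond N0 N1 rho"

definition nlca_morphism ::
  "(complex \<Rightarrow> 'b::ab_group_add \<Rightarrow> 'b) \<Rightarrow> ('b \<Rightarrow> 'b) \<Rightarrow> ('b \<Rightarrow> 'b \<Rightarrow> 'b poly) \<Rightarrow> ('b \<Rightarrow> 'b)
   \<Rightarrow> (complex \<Rightarrow> 'a::ab_group_add \<Rightarrow> 'a) \<Rightarrow> ('a \<Rightarrow> 'a) \<Rightarrow> ('a \<Rightarrow> 'a \<Rightarrow> 'a poly) \<Rightarrow> ('a \<Rightarrow> 'a)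
   \<Rightarrow> ('b \<Rightarrow> 'a) \<Rightarrow> bool" where
  "nlca_morphism sc1 D1 br1 N1 sc0 D0 br0 N0 t \<longleftrightarrow>
     cd_linear sc1 sc0 D1 D0 t \<and>
     (\<forall>m n. br0 (t m) (t n) = map_poly t (br1 m n)) \<and>
     (\<forall>m. t (N1 m) = N0 (t m))"

type_synonym ('a,'b) xmod_data =
  "('a \<Rightarrow> 'a \<Rightarrow> 'a poly) \<times> ('a \<Rightarrow> 'a) \<times> ('b \<Rightarrow> 'b \<Rightarrow> 'b poly) \<times> ('b \<Rightarrow> 'b) \<times> ('b \<Rightarrow> 'a) \<times> ('a \<Rightarrow> 'b \<Rightarrow> 'b poly)"

definition crossed_module ::
  "(complex \<Rightarrow> 'a::ab_group_add \<Rightarrow> 'a) \<Rightarrow> ('a \<Rightarrow> 'a) \<Rightarrow> (complex \<Rightarrow> 'b::ab_group_add \<Rightarrow> 'b) \<Rightarrow> ('b \<Rightarrow> 'b)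
   \<Rightarrow> ('a,'b) xmod_data \<Rightarrow> bool" where
  "crossed_module sc0 D0 sc1 D1 X \<longleftrightarrow> (case X of (br0, N0, br1, N1, t, rho) \<Rightarrow>
     nijenhuis_lca sc0 D0 br0 N0 \<and> nijenhuis_lca sc1 D1 br1 N1 \<and>
     nlca_morphism sc1 D1 br1 N1 sc0 D0 br0 N0 t \<and>
     nij_rep sc0 D0 br0 N0 sc1 D1 rho N1 \<and>
     (\<forall>p m. map_poly t (rho p m) = br0 p (t m)) \<and>
     (\<forall>m n. rho (t m) n = br1 m n))"

type_synonym ('a,'b) strict_data =
  "('b \<Rightarrow> 'a) \<times> ('a \<Rightarrow> 'a \<Rightarrow> 'a poly) \<times> ('a \<Rightarrow> 'b \<Rightarrow> 'b poly) \<times> ('b \<Rightarrow> 'a \<Rightarrow> 'b poly) \<times> ('a \<Rightarrow> 'a) \<times> ('b \<Rightarrow> 'b)"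

text \<open>strict 2-term Nijenhuis \<open>L\<^sub>\<infinity>\<close>-conformal algebra data \<open>(d, l00, l01, l10, N0, N1)\<close>
  on fixed underlying \<open>\<complex>[\<partial>]\<close>-modules \<open>L0, L1\<close> (the bracket on \<open>L1 \<otimes> L1\<close> is zero)\<close>
definition strict_2term ::
  "(complex \<Rightarrow> 'a::ab_group_add \<Rightarrow> 'a) \<Rightarrow> ('a \<Rightarrow> 'a) \<Rightarrow> (complex \<Rightarrow> 'b::ab_group_add \<Rightarrow> 'b) \<Rightarrow> ('b \<Rightarrow> 'b)
   \<Rightarrow> ('a,'b) strict_data \<Rightarrow> bool" where
  "strict_2term sc0 D0 sc1 D1 S \<longleftrightarrow> (case S of (d, l00, l01, l10, N0, N1) \<Rightarrow>
     cd_linear sc1 sc0 D1 D0 d \<and>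
     bilin sc0 sc0 sc0 l00 \<and> sesq D0 D0 D0 l00 \<and>
     bilin sc0 sc1 sc1 l01 \<and> sesq D0 D1 D1 l01 \<and>
     bilin sc1 sc0 sc1 l10 \<and> sesq D1 D0 D1 l10 \<and>
     cd_linear sc0 sc0 D0 D0 N0 \<and> cd_linear sc1 sc1 D1 D1 N1 \<and>
     (\<forall>p m. l01 p m = - subst_nd D1 (l10 m p)) \<and>
     (\<forall>p q. l00 p q = - subst_nd D0 (l00 q p)) \<and>
     (\<forall>p m. map_poly d (l01 p m) = l00 p (d m)) \<and>
     (\<forall>m n. l01 (d m) n = l10 m (d n)) \<and>
     jacobi l00 l00 \<and>
     jacobi l01 l00 \<and>
     (\<forall>m. d (N1 m) = N0 (d m)) \<and>
     nij_cond N0 N0 l00 \<and>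
     nij_cond N0 N1 l01)"

definition strict_to_xmod :: "('a,'b) strict_data \<Rightarrow> ('a,'b) xmod_data" where
  "strict_to_xmod S = (case S of (d, l00, l01, l10, N0, N1) \<Rightarrow>
     (l00, N0, (\<lambda>m n. l01 (d m) n), N1, d, l01))"

end

(* In a strict 2-term algebra the bracket l10 carries no information of its own: skew-symmetry
   gives l10 m p = - l01(p)_{-\<partial>-\<lambda>} m, because the substitution \<lambda> \<mapsto> -\<partial>-\<lambda> is an
   involution.  In a crossed module the bracket of L1 carries none either: the Peiffer identity
   gives [m_\<lambda> n]_1 = \<rho>(t m)_\<lambda> n.  So the two structures consist of the same data
   (d, [-,-]_0, l01 = \<rho>, N0, N1), and the axioms translate into each other term by term.  The
   only non-formal point is the Jacobi identity of the induced bracket on L1: it is the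
   representation Jacobi identity at d m, rewritten with the equivariance
   d(l01(p)_\<lambda> m) = [p_\<lambda> d m]_0. *)
theory Submission
  imports Defs
begin

lemma additive_map_poly: "additive f \<Longrightarrow> additive (map_poly f)"
  by unfold_locales (intro poly_eqI, simp add: coeff_map_poly additive.zero additive.add)

lemma linear_additive: "Vector_Spaces.linear s1 s2 f \<Longrightarrow> additive f"
  by (simp add: additive.intro Vector_Spaces.linear_iff)

lemma cmodule_additive: "cmodule sc D \<Longrightarrow> additive D"
  unfolding cmodule_def by (blast intro: linear_additive)

lemma cmodule_additive_scale: "cmodule sc D \<Longrightarrow> additive (sc c)"
  unfolding cmodule_def by (simp add: additive.intro vector_space.vector_space_assms(1))

lemma cmodule_scale_commute: "cmodule sc D \<Longrightarrow> D (sc c x) = sc c (D x)"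
  unfolding cmodule_def by (simp add: Vector_Spaces.linear_iff)

lemma bilin_zero_left: "bilin scx scy scz br \<Longrightarrow> br 0 b = 0"
  unfolding bilin_def by (metis add_cancel_right_right)

lemma fold_coeffs_pCons_0:
  "F 0 0 = 0 \<Longrightarrow> fold_coeffs F (pCons a p) 0 = F a (fold_coeffs F p 0)"
  by (cases "a = 0 \<and> p = 0") auto

lemma fold_coeffs_map_poly:
  assumes "F 0 0 = 0" and "f 0 = 0"
  shows "fold_coeffs F (map_poly f p) 0 = fold_coeffs (\<lambda>y. F (f y)) p 0"
  by (induction p) (simp_all add: map_poly_pCons assms fold_coeffs_pCons_0)

lemma subst_nd_0 [simp]: "subst_nd D 0 = 0"
  unfolding subst_nd_def by simp

lemma subst_nd_pCons:
  "subst_nd D (pCons c p) = [:c:] - (map_poly D (subst_nd D p) + pCons 0 (subst_nd D p))"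
  unfolding subst_nd_def by (rule fold_coeffs_pCons_0) simp

lemma subst_nd_pCons_0:
  "subst_nd D (pCons 0 p) = - (map_poly D (subst_nd D p) + pCons 0 (subst_nd D p))"
  using subst_nd_pCons[of D 0 p] by simp

lemma additive_subst_nd:
  assumes D: "additive D"
  shows "additive (subst_nd D)"
proof
  fix p q :: "'a poly"
  show "subst_nd D (p + q) = subst_nd D p + subst_nd D q"
  proof (induction p arbitrary: q)
    case (pCons a p)
    obtain b q' where q: "q = pCons b q'" by (cases q)
    have "subst_nd D (pCons a p + q) =
        [:a + b:] - (map_poly D (subst_nd D p + subst_nd D q') + pCons 0 (subst_nd D p + subst_nd D q'))"
      by (simp add: q subst_nd_pCons pCons.IH)
    also have "\<dots> = subst_nd D (pCons a p) + subst_nd D q"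
      by (simp add: q subst_nd_pCons additive.add[OF additive_map_poly[OF D]] algebra_simps)
    finally show ?case .
  qed simp
qed

lemma subst_nd_map_poly:
  assumes D: "additive D" and f: "additive f" and commute: "\<And>x. f (D x) = D (f x)"
  shows "subst_nd D (map_poly f p) = map_poly f (subst_nd D p)"
proof (induction p)
  case (pCons a p)
  have "map_poly D (map_poly f q) = map_poly f (map_poly D q)" for q
    by (simp add: map_poly_map_poly additive.zero D f commute comp_def)
  then show ?case
    using additive_map_poly[OF f]
    by (simp add: map_poly_pCons additive.zero[OF f] subst_nd_pCons pCons.IH
        additive.diff additive.add)
qed simp

lemma subst_nd_subst_nd:
  assumes D: "additive D"
  shows "subst_nd D (subst_nd D p) = p"
proof (induction p)
  case (pCons a p)
  have commute: "subst_nd D (map_poly D q) = map_poly D (subst_nd D q)" for q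
    by (rule subst_nd_map_poly[OF D D]) simp
  have subst: "additive (subst_nd D)"
    using D by (rule additive_subst_nd)
  have "subst_nd D (subst_nd D (pCons a p)) =
     [:a:] - (map_poly D (subst_nd D (subst_nd D p)) + subst_nd D (pCons 0 (subst_nd D p)))"
    by (simp add: subst_nd_pCons additive.diff[OF subst] additive.add[OF subst] commute)
  then show ?case
    by (simp add: pCons.IH subst_nd_pCons)
qed simp

lemma neg_subst_nd_equation_iff:
  assumes D: "additive D"
  shows "x = - subst_nd D y \<longleftrightarrow> y = - subst_nd D x"
  by (auto simp: additive.minus[OF additive_subst_nd[OF D]] subst_nd_subst_nd[OF D])

lemma bilin_opposite:
  assumes "cmodule sc D" and "bilin scx scy sc br"
  shows "bilin scy scx sc (\<lambda>b a. - subst_nd D (br a b))"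
proof -
  have D: "additive D" and sc: "\<And>c. additive (sc c)"
    using assms(1) by (simp_all add: cmodule_additive cmodule_additive_scale)
  have "subst_nd D (map_poly (sc c) q) = map_poly (sc c) (subst_nd D q)" for c q
    by (rule subst_nd_map_poly[OF D sc]) (simp add: cmodule_scale_commute[OF assms(1)])
  then show ?thesis
    using assms(2) unfolding bilin_def
    by (simp add: additive.add[OF additive_subst_nd[OF D]] additive.minus[OF additive_map_poly[OF sc]])
qed

lemma sesq_opposite:
  assumes D: "additive D" and "sesq Dx Dy D br"
  shows "sesq Dy Dx D (\<lambda>b a. - subst_nd D (br a b))"
proof -
  have "subst_nd D (map_poly D q) = map_poly D (subst_nd D q)" for q
    by (rule subst_nd_map_poly[OF D D]) simp
  then show ?thesis
    using assms(2) unfolding sesq_def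
    by (simp add: subst_nd_pCons_0 additive.add[OF additive_subst_nd[OF D]]
        additive.minus[OF additive_subst_nd[OF D]] additive.add[OF additive_map_poly[OF D]]
        additive.minus[OF additive_map_poly[OF D]])
qed

lemma lie_conformal_induced_bracket:
  assumes rep: "conf_rep sc0 D0 br0 sc1 D1 rho"
    and d: "cd_linear sc1 sc0 D1 D0 d"
    and equivariant: "\<forall>p m. map_poly d (rho p m) = br0 p (d m)"
    and skew: "\<forall>m n. rho (d m) n = - subst_nd D1 (rho (d n) m)"
  shows "lie_conformal sc1 D1 (\<lambda>m n. rho (d m) n)"
proof -
  have bilin: "bilin sc0 sc1 sc1 rho" and sesq: "sesq D0 D1 D1 rho" and jac: "jacobi rho br0"
    using rep unfolding conf_rep_def by blast+
  have d_lin: "\<And>x y. d (x + y) = d x + d y" "\<And>c x. d (sc1 c x) = sc0 c (d x)"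
    and d_D: "\<And>x. d (D1 x) = D0 (d x)"
    using d unfolding cd_linear_def Vector_Spaces.linear_iff by blast+
  have "d 0 = 0"
    using d unfolding cd_linear_def by (blast intro: additive.zero linear_additive)
  have "jacobi (\<lambda>m n. rho (d m) n) (\<lambda>m n. rho (d m) n)"
    unfolding jacobi_def
  proof (intro allI)
    fix a b c
    let ?F = "\<lambda>y acc. subst_sum (rho y c) + map_poly (pCons 0) acc"
    have "map_poly (rho (d a)) (rho (d b) c) =
        fold_coeffs ?F (br0 (d a) (d b)) 0 + swap_var (map_poly (rho (d b)) (rho (d a) c))"
      using jac unfolding jacobi_def by blast
    also have "fold_coeffs ?F (br0 (d a) (d b)) 0 = fold_coeffs (\<lambda>y. ?F (d y)) (rho (d a) b) 0"
      unfolding equivariant[rule_format, symmetric]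
      by (rule fold_coeffs_map_poly) (simp_all add: bilin_zero_left[OF bilin] subst_sum_def \<open>d 0 = 0\<close>)
    finally show "map_poly (rho (d a)) (rho (d b) c) =
        fold_coeffs (\<lambda>y. ?F (d y)) (rho (d a) b) 0 + swap_var (map_poly (rho (d b)) (rho (d a) c))" .
  qed
  moreover have "bilin sc1 sc1 sc1 (\<lambda>m n. rho (d m) n)"
    using bilin unfolding bilin_def by (simp add: d_lin)
  moreover have "sesq D1 D1 D1 (\<lambda>m n. rho (d m) n)"
    using sesq unfolding sesq_def by (simp add: d_D)
  ultimately show ?thesis
    using skew unfolding lie_conformal_def by blast
qed

definition xmod_to_strict :: "('b \<Rightarrow> 'b) \<Rightarrow> ('a,'b) xmod_data \<Rightarrow> ('a,'b::ab_group_add) strict_data" where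
  "xmod_to_strict D1 X = (case X of (br0, N0, br1, N1, t, rho) \<Rightarrow>
     (t, br0, rho, (\<lambda>m p. - subst_nd D1 (rho p m)), N0, N1))"

lemma strict_to_xmod_crossed_module:
  assumes c1: "cmodule sc1 D1" and S: "strict_2term sc0 D0 sc1 D1 S"
  shows "crossed_module sc0 D0 sc1 D1 (strict_to_xmod S)"
proof -
  obtain d l00 l01 l10 N0 N1 where S_def: "S = (d, l00, l01, l10, N0, N1)"
    by (cases S) auto
  note axioms = S[unfolded S_def strict_2term_def prod.case]
  have rep: "conf_rep sc0 D0 l00 sc1 D1 l01"
    using axioms unfolding conf_rep_def by blast
  have "l10 m p = - subst_nd D1 (l01 p m)" for m p
    using axioms neg_subst_nd_equation_iff[OF cmodule_additive[OF c1]] by metis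
  then have skew: "\<forall>m n. l01 (d m) n = - subst_nd D1 (l01 (d n) m)"
    using axioms by metis
  have "lie_conformal sc1 D1 (\<lambda>m n. l01 (d m) n)"
    using lie_conformal_induced_bracket[OF rep _ _ skew] axioms by blast
  moreover have "nij_cond N1 N1 (\<lambda>m n. l01 (d m) n)"
  proof -
    have "\<forall>m. d (N1 m) = N0 (d m)" and "nij_cond N0 N1 l01"
      using axioms by blast+
    then show ?thesis
      unfolding nij_cond_def by simp
  qed
  moreover have "\<forall>m n. l00 (d m) (d n) = map_poly d (l01 (d m) n)"
    using axioms by metis
  ultimately show ?thesis
    using axioms rep
    unfolding S_def strict_to_xmod_def crossed_module_def prod.case nijenhuis_lca_def
      lie_conformal_def nlca_morphism_def nij_rep_def
    by blast
qed

lemma xmod_to_strict_strict_2term: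
  assumes c1: "cmodule sc1 D1" and X: "crossed_module sc0 D0 sc1 D1 X"
  shows "strict_2term sc0 D0 sc1 D1 (xmod_to_strict D1 X)"
proof -
  obtain br0 N0 br1 N1 t rho where X_def: "X = (br0, N0, br1, N1, t, rho)"
    by (cases X) auto
  have D1: "additive D1"
    using c1 by (rule cmodule_additive)
  from X[unfolded X_def crossed_module_def prod.case]
  have L0: "nijenhuis_lca sc0 D0 br0 N0" and L1: "nijenhuis_lca sc1 D1 br1 N1"
    and t: "nlca_morphism sc1 D1 br1 N1 sc0 D0 br0 N0 t" and rho: "nij_rep sc0 D0 br0 N0 sc1 D1 rho N1"
    and equivariant: "\<forall>p m. map_poly t (rho p m) = br0 p (t m)"
    and peiffer: "\<forall>m n. rho (t m) n = br1 m n"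
    by blast+
  have "\<forall>m n. rho (t m) n = - subst_nd D1 (rho (t n) m)"
    using peiffer L1 unfolding nijenhuis_lca_def lie_conformal_def by metis
  moreover have "\<forall>p m. rho p m = - subst_nd D1 (- subst_nd D1 (rho p m))"
    using neg_subst_nd_equation_iff[OF D1] by blast
  moreover have "bilin sc1 sc0 sc1 (\<lambda>m p. - subst_nd D1 (rho p m))"
    and "sesq D1 D0 D1 (\<lambda>m p. - subst_nd D1 (rho p m))"
    using rho bilin_opposite[OF c1] sesq_opposite[OF D1] unfolding nij_rep_def conf_rep_def by blast+
  ultimately show ?thesis
    using L0 t rho equivariant
    unfolding X_def xmod_to_strict_def strict_2term_def prod.case nijenhuis_lca_def
      lie_conformal_def nlca_morphism_def nij_rep_def conf_rep_def
    by (clarify; intro conjI; assumption)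
qed

lemma xmod_to_strict_strict_to_xmod:
  assumes c1: "cmodule sc1 D1" and S: "strict_2term sc0 D0 sc1 D1 S"
  shows "xmod_to_strict D1 (strict_to_xmod S) = S"
proof -
  obtain d l00 l01 l10 N0 N1 where S_def: "S = (d, l00, l01, l10, N0, N1)"
    by (cases S) auto
  have "\<forall>p m. l01 p m = - subst_nd D1 (l10 m p)"
    using S unfolding S_def strict_2term_def prod.case by blast
  then have "(\<lambda>m p. - subst_nd D1 (l01 p m)) = l10"
    unfolding fun_eq_iff using neg_subst_nd_equation_iff[OF cmodule_additive[OF c1]] by metis
  then show ?thesis
    unfolding S_def strict_to_xmod_def xmod_to_strict_def by simp
qed

lemma strict_to_xmod_xmod_to_strict:
  assumes X: "crossed_module sc0 D0 sc1 D1 X"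
  shows "strict_to_xmod (xmod_to_strict D1 X) = X"
proof -
  obtain br0 N0 br1 N1 t rho where X_def: "X = (br0, N0, br1, N1, t, rho)"
    by (cases X) auto
  have "\<forall>m n. rho (t m) n = br1 m n"
    using X unfolding X_def crossed_module_def prod.case by blast
  then have "(\<lambda>m n. rho (t m) n) = br1"
    by (simp add: fun_eq_iff)
  then show ?thesis
    unfolding X_def strict_to_xmod_def xmod_to_strict_def by simp
qed

theorem theorem4p10:
  fixes sc0 :: "complex \<Rightarrow> 'a::ab_group_add \<Rightarrow> 'a" and D0 :: "'a \<Rightarrow> 'a"
    and sc1 :: "complex \<Rightarrow> 'b::ab_group_add \<Rightarrow> 'b" and D1 :: "'b \<Rightarrow> 'b"
  assumes "cmodule sc0 D0" and "cmodule sc1 D1"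
  shows "bij_betw strict_to_xmod
           {S. strict_2term sc0 D0 sc1 D1 S}
           {X. crossed_module sc0 D0 sc1 D1 X}"
  by (rule bij_betw_byWitness[where f' = "xmod_to_strict D1"])
    (use assms(2) in \<open>auto intro: xmod_to_strict_strict_to_xmod strict_to_xmod_xmod_to_strict
       strict_to_xmod_crossed_module xmod_to_strict_strict_2term\<close>)

end
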